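(* Let $a, b, n$ be positive integers with $b>1$, $n>1$ and $\gcd(r_b(n),a)=1$, and write $S = S_a(b,n)$. Then the set of maximal elements of $\operatorname{Ap}(S)$ with respect to the partial order $\preceq_S$ is exactly \[\Big\{ a_i + (b-1)\sum_{j=i}^n a_j \;\Big|\; i = 2,\ldots,n\Big\}.\]
   Context: For $\ell \ge 1$, $r_b(\ell) = \sum_{j=0}^{\ell-1} b^j$, and $r_b(0)=0$. For $i \ge 1$, $a_i := r_b(n) + a\, r_b(i-1)$; $S_a(b,n)$ is the numerical semigroup generated by $\{a_i\}$, with multiplicity $a_1$. $\operatorname{Ap}(S) = \{\omega\in S : \omega - a_1 \notin S\}$. For a numerical semigroup $S$, $\preceq_S$ is the partial order on $\mathbb{Z}$ given by $y \preceq_S x$ iff $x - y \in S$. *)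

theory Defs
  imports Main
begin

definition repunit :: "int \<Rightarrow> nat \<Rightarrow> int" where
  "repunit b l = (\<Sum>j<l. b ^ j)"

text \<open>Generators a_i = r_b(n) + a r_b(i-1), meaningful for i >= 1.\<close>
definition gen :: "int \<Rightarrow> int \<Rightarrow> nat \<Rightarrow> nat \<Rightarrow> int" where
  "gen a b n i = repunit b n + a * repunit b (i - 1)"

inductive_set Sgp :: "int \<Rightarrow> int \<Rightarrow> nat \<Rightarrow> int set" for a b n where
  zero: "0 \<in> Sgp a b n"
| step: "x \<in> Sgp a b n \<Longrightarrow> i \<ge> 1 \<Longrightarrow> x + gen a b n i \<in> Sgp a b n"

definition Apery :: "int set \<Rightarrow> int \<Rightarrow> int set" where
  "Apery S m = {w \<in> S. w - m \<notin> S}"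

definition preceq_S :: "int set \<Rightarrow> int \<Rightarrow> int \<Rightarrow> bool" where
  "preceq_S S y x \<longleftrightarrow> x - y \<in> S"

definition maximals :: "int set \<Rightarrow> int set \<Rightarrow> int set" where
  "maximals S A = {x \<in> A. \<forall>y \<in> A. preceq_S S x y \<longrightarrow> y = x}"

end

theory Submission
  imports Defs
begin

text \<open>Write w_i = a_i + (b - 1)(a_i + ... + a_n). Every element of S can be written as
  N r_b(n) + a T, where N counts the generators used, such that the base-b digit sum of
  N + (b - 1) T is at most N. Membership of w_i - a_1, or of w_j - w_i with i \<noteq> j, in S would
  make that quantity a positive multiple of b^n - 1 whose digit sum, at least (b - 1) n, exceeds
  the budget; so the w_i lie in the Apery set and are pairwise incomparable. Conversely, the
  relation b a_k + a_i = a_{k+1} + b a_{i-1} lets one minimise the sum of c_j j^2 over the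
  representations x = sum c_j a_j of an Apery element; a minimal one has c_i \<le> b at its least
  index i and c_j \<le> b - 1 above it, so x lies below w_i. An antichain dominating a set consists
  exactly of its maximal elements.\<close>

section \<open>Base-b digit sums\<close>

function digit_sum :: "nat \<Rightarrow> nat \<Rightarrow> nat" where
  "digit_sum B x = (if x = 0 \<or> B < 2 then x else x mod B + digit_sum B (x div B))"
  by auto
termination by (relation "measure snd") auto

declare digit_sum.simps [simp del]

lemma digit_sum_0 [simp]: "digit_sum B 0 = 0"
  by (simp add: digit_sum.simps)

lemma digit_sum_mult_add:
  assumes "2 \<le> B" "d < B"
  shows "digit_sum B (B * q + d) = d + digit_sum B q"
proof (cases "B * q + d = 0")
  case False
  with assms show ?thesis by (subst digit_sum.simps) simp
qed (use assms in simp)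

lemma digit_sum_Suc_le:
  assumes "2 \<le> B"
  shows "digit_sum B (Suc x) \<le> Suc (digit_sum B x)"
proof (induction x rule: less_induct)
  case (less x)
  define q d where "q = x div B" and "d = x mod B"
  have x: "x = B * q + d" and "d < B" using assms by (auto simp: q_def d_def)
  show ?case
  proof (cases "Suc d < B")
    case True
    then show ?thesis
      using x digit_sum_mult_add[OF assms True] digit_sum_mult_add[OF assms \<open>d < B\<close>] by simp
  next
    case False
    then have d: "d = B - 1" using \<open>d < B\<close> by simp
    then have "q < x" using x assms by (simp add: q_def div_less_dividend)
    have "Suc x = B * Suc q + 0" using x d assms by simp
    then have "digit_sum B (Suc x) = digit_sum B (Suc q)"
      using digit_sum_mult_add[OF assms, of 0 "Suc q"] assms by simp
    also have "\<dots> \<le> Suc (digit_sum B q)" using less \<open>q < x\<close> by simp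
    also have "\<dots> \<le> Suc (digit_sum B x)"
      using x digit_sum_mult_add[OF assms \<open>d < B\<close>] by simp
    finally show ?thesis .
  qed
qed

lemma digit_sum_le:
  assumes "2 \<le> B"
  shows "digit_sum B x \<le> x"
  by (induction x) (use digit_sum_Suc_le[OF assms] le_trans in fastforce)+

lemma digit_sum_add_le:
  assumes "2 \<le> B"
  shows "digit_sum B (x + y) \<le> digit_sum B x + digit_sum B y"
proof (induction y arbitrary: x rule: less_induct)
  case (less y)
  show ?case
  proof (cases "y = 0")
    case False
    define q d q' d' where "q = y div B" and "d = y mod B" and "q' = x div B" and "d' = x mod B"
    have y: "y = B * q + d" and x: "x = B * q' + d'" and "d < B" "d' < B"
      using assms by (auto simp: q_def d_def q'_def d'_def)
    have IH: "digit_sum B (q' + q) \<le> digit_sum B q' + digit_sum B q"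
      using less False assms by (simp add: q_def)
    have ds_x: "digit_sum B x = d' + digit_sum B q'" and ds_y: "digit_sum B y = d + digit_sum B q"
      using x y digit_sum_mult_add[OF assms] \<open>d < B\<close> \<open>d' < B\<close> by simp_all
    show ?thesis
    proof (cases "d' + d < B")
      case True
      have "x + y = B * (q' + q) + (d' + d)" using x y by (simp add: algebra_simps)
      then show ?thesis using digit_sum_mult_add[OF assms True] IH ds_x ds_y by simp
    next
      case False
      have "x + y = B * Suc (q' + q) + (d' + d - B)" using x y False by (simp add: algebra_simps)
      moreover have "d' + d - B < B" using \<open>d < B\<close> \<open>d' < B\<close> by simp
      ultimately have "digit_sum B (x + y) = d' + d - B + digit_sum B (Suc (q' + q))"
        by (simp only: digit_sum_mult_add[OF assms])
      then show ?thesis using digit_sum_Suc_le[OF assms, of "q' + q"] IH ds_x ds_y False assms by arith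
    qed
  qed simp
qed

lemma digit_sum_power:
  assumes "2 \<le> B"
  shows "digit_sum B (B ^ e) = 1"
  by (induction e) (use digit_sum_mult_add[OF assms, of 1 0] digit_sum_mult_add[OF assms, of 0] assms in auto)

lemma digit_sum_power_mult_add:
  assumes "2 \<le> B" "u < B ^ l"
  shows "digit_sum B (B ^ l * q + u) = digit_sum B q + digit_sum B u"
  using assms(2)
proof (induction l arbitrary: u)
  case (Suc l)
  define u' d where "u' = u div B" and "d = u mod B"
  have u: "u = B * u' + d" and "d < B" using assms by (auto simp: u'_def d_def)
  have "u' < B ^ l" using Suc.prems by (simp add: u'_def less_mult_imp_div_less mult.commute)
  have "B ^ Suc l * q + u = B * (B ^ l * q + u') + d" using u by (simp add: algebra_simps)
  then have "digit_sum B (B ^ Suc l * q + u) = d + digit_sum B (B ^ l * q + u')"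
    using digit_sum_mult_add[OF assms(1) \<open>d < B\<close>] by simp
  then show ?case
    using Suc.IH[OF \<open>u' < B ^ l\<close>] digit_sum_mult_add[OF assms(1) \<open>d < B\<close>, of u'] u by simp
qed simp

lemma digit_sum_power_minus_1:
  assumes "2 \<le> B"
  shows "digit_sum B (B ^ l - 1) = (B - 1) * l"
proof (induction l)
  case (Suc l)
  have "B ^ Suc l - 1 = B * (B ^ l - 1) + (B - 1)"
    using assms by (simp add: algebra_simps diff_mult_distrib2)
  then show ?case using Suc digit_sum_mult_add[OF assms, of "B - 1"] assms by simp
qed simp

text \<open>Folding the base-B^l expansion of a multiple of B^l - 1 preserves divisibility and does
  not increase the digit sum, until only the block B^l - 1 itself remains.\<close>
lemma digit_sum_dvd_power_minus_1:
  assumes "2 \<le> B" "1 \<le> l" "0 < y" "(B ^ l - 1) dvd y"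
  shows "(B - 1) * l \<le> digit_sum B y"
  using assms(3,4)
proof (induction y rule: less_induct)
  case (less y)
  have "B ^ 1 \<le> B ^ l" using assms by (intro power_increasing) auto
  then have "2 \<le> B ^ l" using assms by simp
  show ?case
  proof (cases "y < B ^ l")
    case True
    then have "y = B ^ l - 1" using less.prems by (auto dest: dvd_imp_le)
    then show ?thesis using digit_sum_power_minus_1[OF assms(1)] by simp
  next
    case False
    define q u where "q = y div B ^ l" and "u = y mod B ^ l"
    have y: "y = B ^ l * q + u" by (simp add: q_def u_def)
    have "u < B ^ l" unfolding u_def using assms(1) by simp
    have "0 < q" using False assms(1) by (simp add: q_def div_greater_zero_iff)
    have "digit_sum B (q + u) \<le> digit_sum B y"
      using digit_sum_power_mult_add[OF assms(1) \<open>u < B ^ l\<close>] digit_sum_add_le[OF assms(1)] y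
      by simp
    moreover have "q + u < y"
      using y \<open>0 < q\<close> \<open>2 \<le> B ^ l\<close> by (simp add: less_le_trans[of q "2 * q"])
    moreover have "y = (B ^ l - 1) * q + (q + u)"
      using y \<open>2 \<le> B ^ l\<close> by (simp add: diff_mult_distrib)
    then have "(B ^ l - 1) dvd (q + u)" using less.prems by (metis dvd_add_right_iff dvd_triv_left)
    ultimately show ?thesis using less.IH \<open>0 < q\<close> by fastforce
  qed
qed

lemma digit_sum_multiple_power_minus_1:
  assumes "2 \<le> B" "1 \<le> m"
  shows "(B - 1) * l \<le> digit_sum B (m * (B ^ l - 1))"
proof (cases "l = 0")
  case False
  have "0 < B ^ l - 1" using assms False one_less_power[of B l] by simp
  then show ?thesis
    using digit_sum_dvd_power_minus_1[OF assms(1), of l "m * (B ^ l - 1)"] assms False by simp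
qed simp

section \<open>Repunits and the generators\<close>

lemma repunit_0 [simp]: "repunit b 0 = 0"
  by (simp add: repunit_def)

lemma repunit_Suc: "repunit b (Suc l) = b * repunit b l + 1"
  unfolding repunit_def sum.lessThan_Suc_shift by (simp add: sum_distrib_left)

lemma repunit_geometric: "(b - 1) * repunit b l = b ^ l - 1"
  by (induction l) (simp_all add: repunit_Suc algebra_simps)

lemma repunit_add: "repunit b (l + m) = repunit b l + b ^ l * repunit b m"
  by (induction l) (simp_all add: repunit_Suc algebra_simps)

lemma repunit_nonneg: "0 \<le> b \<Longrightarrow> 0 \<le> repunit b l"
  by (simp add: repunit_def sum_nonneg)

lemma repunit_ge_length: "1 \<le> b \<Longrightarrow> int l \<le> repunit b l"
proof (induction l)
  case (Suc l)
  then have "repunit b l \<le> b * repunit b l"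
    using repunit_nonneg[of b l] mult_right_mono[of 1 b "repunit b l"] by simp
  then show ?case using Suc by (simp add: repunit_Suc)
qed simp

lemma gen_1 [simp]: "gen a b n 1 = repunit b n"
  by (simp add: gen_def)

lemma gen_exchange:
  assumes "1 \<le> k" "2 \<le> i"
  shows "b * gen a b n k + gen a b n i = gen a b n (k + 1) + b * gen a b n (i - 1)"
proof -
  have "repunit b k = b * repunit b (k - 1) + 1" "repunit b (i - 1) = b * repunit b (i - 2) + 1"
    using repunit_Suc[of b "k - 1"] repunit_Suc[of b "i - 2"] assms
    by (simp_all add: Suc_diff_Suc numeral_2_eq_2)
  then show ?thesis by (simp add: gen_def algebra_simps numeral_2_eq_2)
qed

lemma sum_gen_tail:
  assumes "1 \<le> i" "i \<le> n + 1"
  shows "(b - 1) * (\<Sum>j = i..n. gen a b n j)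
    = (b - 1) * int (n + 1 - i) * repunit b n + a * (repunit b n - repunit b (i - 1) - int (n + 1 - i))"
  using assms
proof (induction "n + 1 - i" arbitrary: i)
  case (Suc c)
  then have "c = n - i" "i \<le> n" by arith+
  have IH: "(b - 1) * (\<Sum>j = Suc i..n. gen a b n j)
      = (b - 1) * int c * repunit b n + a * (repunit b n - repunit b i - int c)"
    using Suc.hyps(1)[of "Suc i"] \<open>c = n - i\<close> \<open>i \<le> n\<close> by (simp add: of_nat_diff)
  have split: "(\<Sum>j = i..n. gen a b n j) = gen a b n i + (\<Sum>j = Suc i..n. gen a b n j)"
    using Suc.hyps by (intro sum.atLeast_Suc_atMost) simp
  have "a * ((b - 1) * repunit b (i - 1)) = a * (b ^ (i - 1) - 1)"
    by (simp only: repunit_geometric)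
  then have gen_i: "(b - 1) * gen a b n i = (b - 1) * repunit b n + a * (b ^ (i - 1) - 1)"
    by (simp add: gen_def algebra_simps)
  have "repunit b i = repunit b (i - 1) + b ^ (i - 1)"
    using repunit_Suc[of b "i - 1"] repunit_geometric[of b "i - 1"] Suc.prems
    by (simp add: algebra_simps)
  then have "a * repunit b i = a * repunit b (i - 1) + a * b ^ (i - 1)"
    by (metis distrib_left)
  then show ?case
    unfolding split distrib_left gen_i IH using \<open>c = n - i\<close> \<open>i \<le> n\<close>
    by (simp add: algebra_simps of_nat_diff)
qed simp

section \<open>The semigroup\<close>

lemma Sgp_add:
  assumes "x \<in> Sgp a b n" "y \<in> Sgp a b n"
  shows "x + y \<in> Sgp a b n"
  using assms(2)
proof (induction y rule: Sgp.induct)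
  case (step y i)
  then show ?case using Sgp.step[of "x + y" a b n i] by (simp add: add.assoc)
qed (use assms(1) in simp)

lemma Sgp_mult_gen: "1 \<le> j \<Longrightarrow> int m * gen a b n j \<in> Sgp a b n"
  by (induction m) (auto simp: algebra_simps intro: Sgp.intros dest: Sgp.step)

lemma Sgp_sum:
  assumes "finite F" "\<And>j. j \<in> F \<Longrightarrow> 1 \<le> j \<and> 0 \<le> c j"
  shows "(\<Sum>j\<in>F. c j * gen a b n j) \<in> Sgp a b n"
  using assms
proof (induction F rule: finite_induct)
  case (insert j F)
  then have "c j * gen a b n j \<in> Sgp a b n"
    using Sgp_mult_gen[of j "nat (c j)"] by simp
  with insert show ?case by (simp add: Sgp_add)
qed (simp add: Sgp.zero)

lemma Sgp_nonneg:
  assumes "0 \<le> a" "0 \<le> b" "x \<in> Sgp a b n"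
  shows "0 \<le> x"
  using assms(3) by (induction x rule: Sgp.induct) (use assms in \<open>simp_all add: gen_def repunit_nonneg\<close>)

lemma Sgp_finite_combination:
  assumes "x \<in> Sgp a b n"
  obtains c K where "\<And>j. c j \<noteq> 0 \<Longrightarrow> 1 \<le> j \<and> j \<le> K"
    and "x = (\<Sum>j = 1..K. int (c j) * gen a b n j)"
  using assms
proof (induction x arbitrary: thesis rule: Sgp.induct)
  case zero
  show ?case by (rule zero.prems[of "\<lambda>_. 0" 0]) simp_all
next
  case (step x i)
  obtain c K where c: "\<And>j. c j \<noteq> 0 \<Longrightarrow> 1 \<le> j \<and> j \<le> K"
    and x: "x = (\<Sum>j = 1..K. int (c j) * gen a b n j)"
    using step.IH by blast
  define K' where "K' = max K i"
  define c' where "c' = c(i := Suc (c i))"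
  have "c j = 0" if "K < j" for j
    using c[of j] that by linarith
  then have "x = (\<Sum>j = 1..K'. int (c j) * gen a b n j)"
    unfolding x by (intro sum.mono_neutral_left) (auto simp: K'_def)
  moreover have "(\<Sum>j = 1..K'. int (c' j) * gen a b n j)
      = (\<Sum>j = 1..K'. int (c j) * gen a b n j + (if j = i then gen a b n j else 0))"
    by (intro sum.cong) (auto simp: c'_def algebra_simps)
  ultimately have "x + gen a b n i = (\<Sum>j = 1..K'. int (c' j) * gen a b n j)"
    using step.hyps(2) by (simp add: sum.distrib K'_def)
  moreover have "1 \<le> j \<and> j \<le> K'" if "c' j \<noteq> 0" for j
    using c[of j] that step.hyps(2) by (auto simp: c'_def K'_def split: if_splits)
  ultimately show ?case using step.prems by blast
qed

text \<open>Writing an element of the semigroup as N r_b(n) + a T with N the number of generators used,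
  each generator a_i adds b^{i-1} to N + (b - 1) T.\<close>
lemma Sgp_digit_sum_invariant:
  assumes "1 < b" "x \<in> Sgp a b n"
  obtains N T :: nat where "x = int N * repunit b n + a * int T"
    and "digit_sum (nat b) (N + (nat b - 1) * T) \<le> N"
  using assms(2)
proof (induction x arbitrary: thesis rule: Sgp.induct)
  case zero
  show ?case by (rule zero.prems[of 0 0]) simp_all
next
  case (step x i)
  define B where "B = nat b"
  have "2 \<le> B" using assms(1) by (simp add: B_def)
  obtain N T where x: "x = int N * repunit b n + a * int T"
    and ds: "digit_sum B (N + (B - 1) * T) \<le> N"
    using step.IH unfolding B_def by blast
  define t where "t = nat (repunit b (i - 1))"
  have "int ((B - 1) * t + 1) = (b - 1) * repunit b (i - 1) + 1"
    using assms(1) repunit_nonneg[of b "i - 1"] by (simp add: B_def t_def of_nat_diff)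
  also have "\<dots> = int (B ^ (i - 1))"
    using assms(1) by (simp add: repunit_geometric B_def)
  finally have "(B - 1) * t + 1 = B ^ (i - 1)"
    by (simp only: of_nat_eq_iff)
  then have sum_eq: "Suc N + (B - 1) * (T + t) = (N + (B - 1) * T) + B ^ (i - 1)"
    by (simp add: distrib_left)
  have "digit_sum B ((N + (B - 1) * T) + B ^ (i - 1)) \<le> Suc N"
    using digit_sum_add_le[OF \<open>2 \<le> B\<close>, of "N + (B - 1) * T" "B ^ (i - 1)"]
      digit_sum_power[OF \<open>2 \<le> B\<close>] ds by simp
  then have "digit_sum B (Suc N + (B - 1) * (T + t)) \<le> Suc N"
    by (simp only: sum_eq)
  moreover have "x + gen a b n i = int (Suc N) * repunit b n + a * int (T + t)"
    using x assms(1) repunit_nonneg[of b "i - 1"] by (simp add: gen_def t_def algebra_simps)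
  ultimately show ?case using step.prems unfolding B_def by blast
qed

lemma gen_minus_gen_1_mem:
  assumes "0 < a" "1 \<le> b" "n + 1 \<le> j"
  shows "gen a b n j - gen a b n 1 \<in> Sgp a b n"
proof -
  define m where "m = j - 1 - n"
  define e where "e = a - 1 + a * (b - 1) * repunit b m"
  have "0 \<le> e" using assms repunit_nonneg[of b m] by (simp add: e_def)
  have "gen a b n j - gen a b n 1 = a * repunit b (n + m)"
    using assms(3) by (simp add: gen_def m_def)
  also have "\<dots> = a * repunit b n + a * b ^ n * repunit b m"
    by (simp only: repunit_add distrib_left mult.assoc)
  also have "\<dots> = a * repunit b n + a * ((b - 1) * repunit b n + 1) * repunit b m"
    by (simp add: repunit_geometric)
  also have "\<dots> = gen a b n (m + 1) + int (nat e) * gen a b n 1"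
    using \<open>0 \<le> e\<close> by (simp add: gen_def e_def algebra_simps)
  finally show ?thesis
    using Sgp_add Sgp_mult_gen[of "m + 1" 1] Sgp_mult_gen[of 1 "nat e"] by simp
qed

section \<open>Maximal elements of the Apery set\<close>

lemma sum_add_delta:
  fixes f u :: "nat \<Rightarrow> 'a::comm_semiring_1"
  assumes "finite A" "p \<in> A"
  shows "(\<Sum>j\<in>A. (u j + (if j = p then t else 0)) * f j) = (\<Sum>j\<in>A. u j * f j) + t * f p"
  using assms by (simp add: distrib_right sum.distrib if_distrib[of "\<lambda>s. s * f _"] cong: if_cong)

lemma maximals_eq_dominating_antichain:
  assumes "S \<subseteq> {0..}" "\<And>x y. x \<in> S \<Longrightarrow> y \<in> S \<Longrightarrow> x + y \<in> S" "W \<subseteq> A"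
    and dominating: "\<And>x. x \<in> A \<Longrightarrow> \<exists>w\<in>W. w - x \<in> S"
    and antichain: "\<And>v w. v \<in> W \<Longrightarrow> w \<in> W \<Longrightarrow> w - v \<in> S \<Longrightarrow> v = w"
  shows "maximals S A = W"
proof
  show "maximals S A \<subseteq> W"
  proof
    fix x assume "x \<in> maximals S A"
    then have "x \<in> A" and "\<And>y. y \<in> A \<Longrightarrow> y - x \<in> S \<Longrightarrow> y = x"
      by (auto simp: maximals_def preceq_S_def)
    with dominating \<open>W \<subseteq> A\<close> show "x \<in> W" by blast
  qed
  show "W \<subseteq> maximals S A"
  proof
    fix w assume "w \<in> W"
    have "y = w" if "y \<in> A" "y - w \<in> S" for y
    proof -
      obtain v where "v \<in> W" "v - y \<in> S" using dominating \<open>y \<in> A\<close> by blast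
      then have "(y - w) + (v - y) \<in> S" using assms(2) \<open>y - w \<in> S\<close> by blast
      then have "v = w" using antichain[of w v] \<open>v \<in> W\<close> \<open>w \<in> W\<close> by simp
      then have "0 \<le> w - y" "0 \<le> y - w" using \<open>v - y \<in> S\<close> \<open>y - w \<in> S\<close> assms(1) by auto
      then show "y = w" by simp
    qed
    then show "w \<in> maximals S A" using \<open>w \<in> W\<close> \<open>W \<subseteq> A\<close> by (auto simp: maximals_def preceq_S_def)
  qed
qed

locale repunit_semigroup =
  fixes a b :: int and n :: nat
  assumes a_pos: "0 < a" and b_gt_1: "1 < b" and n_gt_1: "1 < n"
    and coprime: "gcd (repunit b n) a = 1"
begin

abbreviation g :: "nat \<Rightarrow> int" where "g \<equiv> gen a b n"
abbreviation r :: int where "r \<equiv> repunit b n"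
abbreviation S :: "int set" where "S \<equiv> Sgp a b n"

definition ap_max :: "nat \<Rightarrow> int" where
  "ap_max i = g i + (b - 1) * (\<Sum>j = i..n. g j)"

lemma n_le_r: "int n \<le> r"
  using repunit_ge_length b_gt_1 by simp

lemma ap_max_closed_form:
  assumes "1 \<le> i" "i \<le> n + 1"
  shows "ap_max i = (1 + (b - 1) * int (n + 1 - i)) * r + a * (r - int (n + 1 - i))"
  using sum_gen_tail[OF assms, of b a] by (simp add: ap_max_def gen_def algebra_simps)

lemma ap_max_mem:
  assumes "1 \<le> i"
  shows "ap_max i \<in> S"
proof -
  have "(\<Sum>j = i..n. (b - 1) * g j) \<in> S"
    using assms b_gt_1 by (intro Sgp_sum) auto
  then have "(b - 1) * (\<Sum>j = i..n. g j) \<in> S"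
    by (simp add: sum_distrib_left)
  then show ?thesis
    using Sgp_add Sgp_mult_gen[OF assms, of 1] by (simp add: ap_max_def)
qed

text \<open>Comparing a second expression z = M r_b(n) + a V with the one from the digit-sum invariant,
  coprimality forces z = (M - a k) r_b(n) + a (V + k r_b(n)) for some integer k, and the digit sum
  bound excludes k + q > 0 because digit sums of positive multiples of b^n - 1 are at least
  (b - 1) n.\<close>
lemma Sgp_mem_constraint:
  assumes mem: "M * r + a * V \<in> S" and shape: "M + (b - 1) * V = q * (b ^ n - 1)"
    and small: "M < (b - 1) * int n" and "q \<le> 1"
  obtains k where "k + q \<le> 0" "a * k \<le> M" "0 \<le> V + k * r"
proof -
  define B where "B = nat b"
  have "2 \<le> B" using b_gt_1 by (simp add: B_def)
  obtain N T where NT: "M * r + a * V = int N * r + a * int T"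
    and ds: "digit_sum B (N + (B - 1) * T) \<le> N"
    using Sgp_digit_sum_invariant[OF b_gt_1 mem] unfolding B_def by blast
  have "(M - int N) * r = a * (int T - V)" using NT by (simp add: algebra_simps)
  then have "a dvd (M - int N) * r" by simp
  moreover have "coprime a r" using coprime by (simp add: coprime_iff_gcd_eq_1 gcd.commute)
  ultimately obtain k where k: "M - int N = a * k"
    by (auto simp: coprime_dvd_mult_left_iff)
  have "a * (k * r) = a * (int T - V)"
    using \<open>(M - int N) * r = a * (int T - V)\<close> k by (metis mult.assoc)
  then have "k * r = int T - V" using a_pos by simp
  then have T: "int T = V + k * r" by simp
  have "k + q \<le> 0"
  proof (rule ccontr)
    assume "\<not> k + q \<le> 0"
    then have "0 \<le> k" using \<open>q \<le> 1\<close> by simp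
    define P K m where "P = N + (B - 1) * T" and "K = nat (a * k)" and "m = nat (k + q)"
    have "int (B - 1) = b - 1" using b_gt_1 by (simp add: B_def)
    then have "int (P + K) = int N + (b - 1) * int T + a * k"
      using a_pos \<open>0 \<le> k\<close> by (simp add: P_def K_def)
    also have "\<dots> = M + (b - 1) * V + k * ((b - 1) * r)"
      using k T by (simp add: algebra_simps)
    also have "\<dots> = M + (b - 1) * V + k * (b ^ n - 1)"
      by (simp only: repunit_geometric)
    also have "\<dots> = (k + q) * (b ^ n - 1)"
      unfolding shape by (simp add: algebra_simps)
    also have "\<dots> = int (m * (B ^ n - 1))"
      using b_gt_1 \<open>\<not> k + q \<le> 0\<close> by (simp add: m_def B_def of_nat_diff)
    finally have "P + K = m * (B ^ n - 1)" by (simp only: of_nat_eq_iff)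
    then have "(B - 1) * n \<le> digit_sum B (P + K)"
      using digit_sum_multiple_power_minus_1[OF \<open>2 \<le> B\<close>] \<open>\<not> k + q \<le> 0\<close> by (simp add: m_def)
    also have "\<dots> \<le> N + K"
      using digit_sum_add_le[OF \<open>2 \<le> B\<close>, of P K] digit_sum_le[OF \<open>2 \<le> B\<close>, of K] ds
      by (simp add: P_def)
    finally have "int ((B - 1) * n) \<le> int (N + K)" by (simp only: of_nat_le_iff)
    moreover have "int (N + K) = M" using k a_pos \<open>0 \<le> k\<close> by (simp add: K_def)
    ultimately show False using small \<open>int (B - 1) = b - 1\<close> by simp
  qed
  moreover have "a * k \<le> M" and "0 \<le> V + k * r" using k T by simp_all
  ultimately show thesis using that by blast
qed

lemma ap_max_minus_gen_1_not_mem: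
  assumes "2 \<le> i" "i \<le> n"
  shows "ap_max i - g 1 \<notin> S"
proof
  define c where "c = int (n + 1 - i)"
  have "1 \<le> c" "c < int n" using assms by (simp_all add: c_def)
  assume "ap_max i - g 1 \<in> S"
  moreover have "ap_max i - g 1 = ((b - 1) * c) * r + a * (r - c)"
    using ap_max_closed_form[of i] assms by (simp add: c_def gen_def algebra_simps)
  ultimately have mem: "((b - 1) * c) * r + a * (r - c) \<in> S" by simp
  have shape: "(b - 1) * c + (b - 1) * (r - c) = 1 * (b ^ n - 1)"
    using repunit_geometric[of b n] by (simp add: algebra_simps)
  have small: "(b - 1) * c < (b - 1) * int n"
    using b_gt_1 \<open>c < int n\<close> by (intro mult_strict_left_mono) simp_all
  obtain k where "k + 1 \<le> 0" "0 \<le> r - c + k * r"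
    using Sgp_mem_constraint[OF mem shape small] by auto
  moreover have "0 \<le> r" using n_le_r by simp
  ultimately have "r - c + k * r \<le> - c"
    using mult_right_mono[of k "-1" r] by simp
  then show False using \<open>0 \<le> r - c + k * r\<close> \<open>1 \<le> c\<close> by simp
qed

lemma ap_max_antichain:
  assumes "2 \<le> i" "i \<le> n" "2 \<le> j" "j \<le> n" and mem: "ap_max j - ap_max i \<in> S"
  shows "i = j"
proof -
  define \<delta> where "\<delta> = int i - int j"
  have "ap_max j - ap_max i = ((b - 1) * \<delta>) * r + a * (- \<delta>)"
    using ap_max_closed_form[of i] ap_max_closed_form[of j] assms
    by (simp add: \<delta>_def of_nat_diff algebra_simps)
  then have mem': "((b - 1) * \<delta>) * r + a * (- \<delta>) \<in> S" using mem by simp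
  have shape: "(b - 1) * \<delta> + (b - 1) * (- \<delta>) = 0 * (b ^ n - 1)" by simp
  have small: "(b - 1) * \<delta> < (b - 1) * int n"
    using assms b_gt_1 by (simp add: \<delta>_def)
  obtain k where k: "k \<le> 0" "a * k \<le> (b - 1) * \<delta>" "0 \<le> - \<delta> + k * r"
    using Sgp_mem_constraint[OF mem' shape small] by auto
  show "i = j"
  proof (cases "k = 0")
    case True
    then have "\<delta> = 0" using k b_gt_1 by (simp add: zero_le_mult_iff)
    then show ?thesis by (simp add: \<delta>_def)
  next
    case False
    then have "k * r \<le> - r" using k n_le_r mult_right_mono[of k "-1" r] by simp
    then show ?thesis using k n_le_r assms by (simp add: \<delta>_def)
  qed
qed

lemma Apery_representation_support:
  assumes "x - g 1 \<notin> S" and supp: "\<And>j. c j \<noteq> 0 \<Longrightarrow> 1 \<le> j \<and> j \<le> K"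
    and x: "x = (\<Sum>j = 1..K. int (c j) * g j)" and "c j \<noteq> 0"
  shows "2 \<le> j \<and> j \<le> n"
proof (rule ccontr)
  assume "\<not> (2 \<le> j \<and> j \<le> n)"
  then have "g j - g 1 \<in> S"
    using supp[OF \<open>c j \<noteq> 0\<close>] gen_minus_gen_1_mem[of a b n j] a_pos b_gt_1
    by (cases "j = 1") (auto intro: Sgp.zero)
  define c' where "c' = c(j := c j - 1)"
  have "x = (\<Sum>j' = 1..K. int (c' j') * g j' + (if j' = j then g j' else 0))"
    unfolding x using \<open>c j \<noteq> 0\<close> by (intro sum.cong) (auto simp: c'_def algebra_simps of_nat_diff)
  also have "\<dots> = (\<Sum>j' = 1..K. int (c' j') * g j') + g j"
    using supp[OF \<open>c j \<noteq> 0\<close>] by (simp add: sum.distrib)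
  finally have "x - g 1 = (g j - g 1) + (\<Sum>j' = 1..K. int (c' j') * g j')" by simp
  moreover have "(\<Sum>j' = 1..K. int (c' j') * g j') \<in> S" by (intro Sgp_sum) auto
  ultimately show False using \<open>g j - g 1 \<in> S\<close> Sgp_add assms(1) by metis
qed

definition weight :: "(nat \<Rightarrow> nat) \<Rightarrow> nat" where
  "weight c = (\<Sum>j = 1..n + 1. c j * j\<^sup>2)"

text \<open>Trading b copies of a_k and one a_i (i \<le> k) for a_{k+1} and b copies of a_{i-1}
  strictly decreases the weight, since (k - i + 1)((b - 1)(k + i - 1) - 2) > 0.\<close>
lemma exchange_decreases_weight:
  assumes "2 \<le> i" "i \<le> k" "k \<le> n" "b \<le> int (c k)"
    and "if i = k then b + 1 \<le> int (c k) else 1 \<le> c i"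
  obtains c' where "(\<Sum>j = 1..n + 1. int (c' j) * g j) = (\<Sum>j = 1..n + 1. int (c j) * g j)"
    and "\<And>j. c' j \<noteq> 0 \<Longrightarrow> c j \<noteq> 0 \<or> j = i - 1 \<or> j = k + 1"
    and "weight c' < weight c"
proof -
  define d where "d j = int (c j) + (if j = k then - b else 0) + (if j = i then - 1 else 0)
    + (if j = k + 1 then 1 else 0) + (if j = i - 1 then b else 0)" for j
  have "0 \<le> d j" for j
    using assms b_gt_1 by (auto simp: d_def)
  define c' where "c' j = nat (d j)" for j
  have c': "int (c' j) = d j" for j using \<open>0 \<le> d j\<close> by (simp add: c'_def)
  have mem: "finite {1..n + 1}" "k \<in> {1..n + 1}" "i \<in> {1..n + 1}" "k + 1 \<in> {1..n + 1}"
    "i - 1 \<in> {1..n + 1}"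
    using assms by auto
  have shift: "(\<Sum>j = 1..n + 1. d j * f j)
    = (\<Sum>j = 1..n + 1. int (c j) * f j) - b * f k - f i + f (k + 1) + b * f (i - 1)" for f
    unfolding d_def by (simp only: sum_add_delta[OF mem(1)] mem)
  have "(\<Sum>j = 1..n + 1. int (c' j) * g j) = (\<Sum>j = 1..n + 1. int (c j) * g j)"
    using shift[of g] gen_exchange[of k i b a n] assms by (simp add: c')
  moreover have "c' j \<noteq> 0 \<Longrightarrow> c j \<noteq> 0 \<or> j = i - 1 \<or> j = k + 1" for j
    using b_gt_1 by (auto simp: c'_def d_def split: if_splits)
  moreover have "int (weight c') < int (weight c)"
  proof -
    have "int (weight c') = (\<Sum>j = 1..n + 1. d j * int (j\<^sup>2))"
      unfolding weight_def of_nat_sum of_nat_mult c' ..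
    also have "\<dots> = int (weight c) - b * int (k\<^sup>2) - int (i\<^sup>2) + int ((k + 1)\<^sup>2)
        + b * int ((i - 1)\<^sup>2)"
      unfolding shift weight_def of_nat_sum of_nat_mult ..
    also have "\<dots> = int (weight c) - (int k - int i + 1) * ((b - 1) * (int k + int i - 1) - 2)"
      unfolding of_nat_power using assms by (simp add: of_nat_diff power2_eq_square algebra_simps)
    finally show ?thesis
      using assms b_gt_1 mult_mono[of 1 "b - 1" 3 "int k + int i - 1"] by simp
  qed
  ultimately show thesis using that by simp
qed

definition supported_rep :: "int \<Rightarrow> (nat \<Rightarrow> nat) \<Rightarrow> bool" where
  "supported_rep x c \<longleftrightarrow> (\<forall>j. c j \<noteq> 0 \<longrightarrow> 2 \<le> j \<and> j \<le> n)
    \<and> x = (\<Sum>j = 1..n + 1. int (c j) * g j)"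

lemma supported_rep_if_not_mem:
  assumes "x - g 1 \<notin> S" and supp: "\<And>j. c j \<noteq> 0 \<Longrightarrow> 1 \<le> j \<and> j \<le> K"
    and x: "x = (\<Sum>j = 1..K. int (c j) * g j)"
  shows "supported_rep x c"
proof -
  have supp': "c j \<noteq> 0 \<Longrightarrow> 2 \<le> j \<and> j \<le> n" for j
    using Apery_representation_support[OF assms] by blast
  have "c j = 0" if "K < j" for j
    using supp[of j] that by (cases "c j = 0") auto
  then have "(\<Sum>j = 1..K. int (c j) * g j) = (\<Sum>j = 1..max K (n + 1). int (c j) * g j)"
    by (intro sum.mono_neutral_left) auto
  moreover have "c j = 0" if "n + 1 < j" for j
    using supp'[of j] that by (cases "c j = 0") auto
  then have "(\<Sum>j = 1..max K (n + 1). int (c j) * g j) = (\<Sum>j = 1..n + 1. int (c j) * g j)"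
    by (intro sum.mono_neutral_right) auto
  ultimately show ?thesis using supp' x by (simp add: supported_rep_def)
qed

lemma minimal_supported_rep_no_exchange:
  assumes "x - g 1 \<notin> S" "supported_rep x c"
    and minimal: "\<And>c'. supported_rep x c' \<Longrightarrow> weight c \<le> weight c'"
    and "2 \<le> i" "i \<le> k" "k \<le> n" "b \<le> int (c k)"
  shows "if i = k then int (c k) \<le> b else c i = 0"
proof (rule ccontr)
  assume "\<not> ?thesis"
  then have exchangeable: "if i = k then b + 1 \<le> int (c k) else 1 \<le> c i"
    by (simp split: if_splits)
  obtain c' where "(\<Sum>j = 1..n + 1. int (c' j) * g j) = (\<Sum>j = 1..n + 1. int (c j) * g j)"
    and supp: "\<And>j. c' j \<noteq> 0 \<Longrightarrow> c j \<noteq> 0 \<or> j = i - 1 \<or> j = k + 1"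
    and "weight c' < weight c"
    using exchange_decreases_weight[OF assms(4-7) exchangeable] by blast
  have supp_c: "c j \<noteq> 0 \<Longrightarrow> 2 \<le> j \<and> j \<le> n" and x: "x = (\<Sum>j = 1..n + 1. int (c j) * g j)" for j
    using \<open>supported_rep x c\<close> by (auto simp: supported_rep_def)
  have "x = (\<Sum>j = 1..n + 1. int (c' j) * g j)"
    using x \<open>(\<Sum>j = 1..n + 1. int (c' j) * g j) = (\<Sum>j = 1..n + 1. int (c j) * g j)\<close> by simp
  moreover have "1 \<le> j \<and> j \<le> n + 1" if "c' j \<noteq> 0" for j
    using supp[OF that] supp_c[of j] assms(4-6) by auto
  ultimately have "supported_rep x c'"
    using supported_rep_if_not_mem[OF assms(1)] by blast
  then show False using minimal \<open>weight c' < weight c\<close> by (simp add: not_le[symmetric])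
qed

lemma Apery_reduced_representation:
  assumes "x \<in> S" "x - g 1 \<notin> S"
  obtains i c where "2 \<le> i" "i \<le> n" "\<And>j. c j \<noteq> 0 \<Longrightarrow> i \<le> j \<and> j \<le> n"
    "int (c i) \<le> b" "\<And>j. i < j \<Longrightarrow> int (c j) \<le> b - 1"
    "x = (\<Sum>j = 1..n + 1. int (c j) * g j)"
proof -
  obtain c0 K where "\<And>j. c0 j \<noteq> 0 \<Longrightarrow> 1 \<le> j \<and> j \<le> K" "x = (\<Sum>j = 1..K. int (c0 j) * g j)"
    using Sgp_finite_combination[OF assms(1)] by blast
  then have "supported_rep x c0" by (rule supported_rep_if_not_mem[OF assms(2)])
  then obtain c where "supported_rep x c" and minimal: "\<And>c'. supported_rep x c' \<Longrightarrow> weight c \<le> weight c'"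
    using ex_has_least_nat[of "supported_rep x" c0 weight] by blast
  note no_exchange = minimal_supported_rep_no_exchange[OF assms(2) this]
  have supp: "\<And>j. c j \<noteq> 0 \<Longrightarrow> 2 \<le> j \<and> j \<le> n"
    and x: "x = (\<Sum>j = 1..n + 1. int (c j) * g j)"
    using \<open>supported_rep x c\<close> by (auto simp: supported_rep_def)
  define i where "i = (if \<exists>j. c j \<noteq> 0 then LEAST j. c j \<noteq> 0 else 2)"
  have i_least: "i \<le> j" if "c j \<noteq> 0" for j
    using that by (auto simp: i_def intro: Least_le)
  have c_i: "c i \<noteq> 0" if "c j \<noteq> 0" for j
    using that LeastI_ex[of "\<lambda>j. c j \<noteq> 0"] by (auto simp: i_def)
  have "2 \<le> i \<and> i \<le> n"
  proof (cases "\<exists>j. c j \<noteq> 0")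
    case True
    then show ?thesis using c_i supp by blast
  qed (use n_gt_1 in \<open>simp add: i_def\<close>)
  moreover have "int (c i) \<le> b"
    using no_exchange[of i i] \<open>2 \<le> i \<and> i \<le> n\<close> by force
  moreover have "int (c j) \<le> b - 1" if "i < j" for j
  proof (rule ccontr)
    assume "\<not> int (c j) \<le> b - 1"
    then have "c j \<noteq> 0" using b_gt_1 by auto
    then show False
      using no_exchange[of i j] c_i[OF \<open>c j \<noteq> 0\<close>] supp[OF \<open>c j \<noteq> 0\<close>]
        \<open>\<not> int (c j) \<le> b - 1\<close> \<open>i < j\<close> \<open>2 \<le> i \<and> i \<le> n\<close> by simp
  qed
  ultimately show thesis
    using that[of i c] i_least supp x by blast
qed

lemma reduced_representation_below_ap_max:
  assumes "2 \<le> i" "i \<le> n" and supp: "\<And>j. c j \<noteq> 0 \<Longrightarrow> i \<le> j \<and> j \<le> n"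
    and "int (c i) \<le> b" "\<And>j. i < j \<Longrightarrow> int (c j) \<le> b - 1"
  shows "ap_max i - (\<Sum>j = 1..n + 1. int (c j) * g j) \<in> S"
proof -
  define w where "w j = b - 1 + (if j = i then 1 else 0)" for j
  have "(\<Sum>j = i..n. w j * g j) = (\<Sum>j = i..n. (b - 1) * g j) + 1 * g i"
    unfolding w_def using assms(2) by (intro sum_add_delta) auto
  then have "ap_max i = (\<Sum>j = i..n. w j * g j)"
    by (simp add: ap_max_def sum_distrib_left)
  moreover have "c j = 0" if "j < i \<or> n < j" for j
    using supp[of j] that by (cases "c j = 0") auto
  then have "(\<Sum>j = 1..n + 1. int (c j) * g j) = (\<Sum>j = i..n. int (c j) * g j)"
    using assms(1) by (intro sum.mono_neutral_right) auto
  ultimately have "ap_max i - (\<Sum>j = 1..n + 1. int (c j) * g j) = (\<Sum>j = i..n. (w j - int (c j)) * g j)"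
    by (simp add: sum_subtractf left_diff_distrib)
  also have "\<dots> \<in> S"
    using assms by (intro Sgp_sum) (auto simp: w_def)
  finally show ?thesis .
qed

lemma Apery_below_ap_max:
  assumes "x \<in> Apery S (g 1)"
  shows "\<exists>i\<in>{2..n}. ap_max i - x \<in> S"
proof -
  have "x \<in> S" "x - g 1 \<notin> S" using assms by (simp_all add: Apery_def)
  then obtain i c where i: "2 \<le> i" "i \<le> n" and "\<And>j. c j \<noteq> 0 \<Longrightarrow> i \<le> j \<and> j \<le> n"
    "int (c i) \<le> b" "\<And>j. i < j \<Longrightarrow> int (c j) \<le> b - 1"
    and x: "x = (\<Sum>j = 1..n + 1. int (c j) * g j)"
    using Apery_reduced_representation by blast
  then have "ap_max i - x \<in> S"
    unfolding x by (intro reduced_representation_below_ap_max)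
  then show ?thesis using i by auto
qed

theorem maximals_Apery: "maximals S (Apery S (g 1)) = ap_max ` {2..n}"
proof (rule maximals_eq_dominating_antichain)
  show "S \<subseteq> {0..}" using Sgp_nonneg[of a b _ n] a_pos b_gt_1 by (auto simp: subset_eq)
  show "ap_max ` {2..n} \<subseteq> Apery S (g 1)"
    using ap_max_mem ap_max_minus_gen_1_not_mem by (auto simp: Apery_def)
qed (auto intro: Sgp_add Apery_below_ap_max dest: ap_max_antichain[rotated 4])

end

theorem proposition29:
  fixes a b :: int and n :: nat
  assumes "a > 0" and "b > 1" and "n > 1"
    and "gcd (repunit b n) a = 1"
  shows "maximals (Sgp a b n) (Apery (Sgp a b n) (gen a b n 1)) =
    {gen a b n i + (b - 1) * (\<Sum>j = i..n. gen a b n j) | i. 2 \<le> i \<and> i \<le> n}"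
proof -
  interpret repunit_semigroup a b n
    using assms by unfold_locales
  show ?thesis
    using maximals_Apery by (auto simp: ap_max_def)
qed

end
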